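(* The classes AsLimSup and PosLimInf are not closed under complement: there is an automaton $A$ in AsLimSup (over $\Sigma=\{a,b\}$) such that no automaton $B$ in AsLimSup satisfies $L_B=1-L_A$, and there is an automaton $A'$ in PosLimInf such that no automaton $B'$ in PosLimInf satisfies $L_{B'}=1-L_{A'}$.
   Context: A probabilistic weighted automaton over a finite alphabet $\Sigma$ is a tuple $A=(Q,\rho_I,\Sigma,\delta,\gamma)$ where $Q$ is a finite set of states, $\rho_I$ is a probability distribution on $Q$, $\delta:Q\times\Sigma\to\mathcal D(Q)$ assigns to each state and letter a probability distribution on $Q$, and $\gamma:Q\times\Sigma\times Q\to\mathbb Q$ is a weight function. A run over an infinite word $w=\sigma_1\sigma_2\dots$ is a sequence $r=q_0\sigma_1q_1\sigma_2\dots$ with $\rho_I(q_0)>0$ and $\delta(q_i,\sigma_{i+1})(q_{i+1})>0$ for all $i$; its weight sequence is $\gamma(r)=v_0v_1\dots$ with $v_i=\gamma(q_i,\sigma_{i+1},q_{i+1})$. For each $w$, the probabilities of finite run prefixes induce a probability measure $\mathbb P^A$ on runs over $w$. For a value function $\mathrm{Val}$, positive semantics: $L^{>0}_A(w)=\sup\{\eta\mid \mathbb P^A(\{r:\mathrm{Val}(\gamma(r))\ge\eta\})>0\}$; almost-sure semantics: $L^{=1}_A(w)=\sup\{\eta\mid \mathbb P^A(\{r:\mathrm{Val}(\gamma(r))\ge\eta\})=1\}$. $\mathsf{LimSup}(v)=\limsup_n v_n$, $\mathsf{LimInf}(v)=\liminf_n v_n$. AsLimSup is the class of $\mathsf{LimSup}$-automata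 under almost-sure semantics; PosLimInf is the class of $\mathsf{LimInf}$-automata under positive semantics. The complement of a quantitative language $L$ is $1-L$. *)

theory Defs
  imports "HOL-Probability.Probability"
begin

datatype ab = a | b

lemma UNIV_ab: "(UNIV :: ab set) = {a, b}"
  using ab.exhaust by auto

instance ab :: finite
  by standard (simp add: UNIV_ab)

text \<open>Probabilistic weighted automaton with states drawn from nat (so that
  automata with arbitrary finite state sets can be quantified over inside a formula).\<close>
record 's pwa =
  states :: "nat set"
  init   :: "nat pmf"
  trans  :: "nat \<Rightarrow> 's \<Rightarrow> nat pmf"
  weight :: "nat \<Rightarrow> 's \<Rightarrow> nat \<Rightarrow> rat"

definition wf_pwa :: "('s::finite) pwa \<Rightarrow> bool" where
  "wf_pwa A \<longleftrightarrow> finite (states A) \<and> set_pmf (init A) \<subseteq> states A \<and>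
     (\<forall>q\<in>states A. \<forall>\<sigma>. set_pmf (trans A q \<sigma>) \<subseteq> states A)"

definition run_space :: "(nat \<Rightarrow> nat) measure" where
  "run_space = PiM UNIV (\<lambda>_. count_space UNIV)"

text \<open>The probability measure on runs over the infinite word w (w i is the letter
  sigma_(i+1)), determined by the probabilities of finite run prefixes.\<close>
definition run_measure :: "'s pwa \<Rightarrow> (nat \<Rightarrow> 's) \<Rightarrow> (nat \<Rightarrow> nat) measure" where
  "run_measure A w = (THE M. prob_space M \<and> sets M = sets run_space \<and>
     (\<forall>n qs. measure M {r \<in> space M. \<forall>i\<le>n. r i = qs i} =
        pmf (init A) (qs 0) * (\<Prod>i<n. pmf (trans A (qs i) (w i)) (qs (Suc i)))))"

definition weight_seq :: "'s pwa \<Rightarrow> (nat \<Rightarrow> 's) \<Rightarrow> (nat \<Rightarrow> nat) \<Rightarrow> nat \<Rightarrow> real" where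
  "weight_seq A w r i = real_of_rat (weight A (r i) (w i) (r (Suc i)))"

definition LimSupV :: "(nat \<Rightarrow> real) \<Rightarrow> ereal" where
  "LimSupV v = limsup (\<lambda>n. ereal (v n))"

definition LimInfV :: "(nat \<Rightarrow> real) \<Rightarrow> ereal" where
  "LimInfV v = liminf (\<lambda>n. ereal (v n))"

definition val_event :: "'s pwa \<Rightarrow> ((nat \<Rightarrow> real) \<Rightarrow> ereal) \<Rightarrow> (nat \<Rightarrow> 's) \<Rightarrow> real \<Rightarrow> (nat \<Rightarrow> nat) set" where
  "val_event A Val w \<eta> = {r \<in> space (run_measure A w). ereal \<eta> \<le> Val (weight_seq A w r)}"

definition L_pos :: "'s pwa \<Rightarrow> ((nat \<Rightarrow> real) \<Rightarrow> ereal) \<Rightarrow> (nat \<Rightarrow> 's) \<Rightarrow> real" where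
  "L_pos A Val w = Sup {\<eta>. measure (run_measure A w) (val_event A Val w \<eta>) > 0}"

definition L_as :: "'s pwa \<Rightarrow> ((nat \<Rightarrow> real) \<Rightarrow> ereal) \<Rightarrow> (nat \<Rightarrow> 's) \<Rightarrow> real" where
  "L_as A Val w = Sup {\<eta>. measure (run_measure A w) (val_event A Val w \<eta>) = 1}"

end

theory Submission
  imports Defs
begin

text \<open>
  Let \<open>A\<close> be the one-state LimSup automaton that reads weight 1 on \<open>a\<close> and 0 on \<open>b\<close>: its
  value is 1 on words with infinitely many \<open>a\<close> and 0 on words that are eventually \<open>b\<close>. A
  complement \<open>B\<close> in AsLimSup must give value 1 to every eventually-\<open>b\<close> word \<open>v\<close>, so almost every
  run of \<open>B\<close> over \<open>v\<close> takes a transition of weight \<open>> 1/2\<close> infinitely often. A diagonal word then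
  defeats \<open>B\<close>: extend a finite prefix by so many \<open>b\<close>'s that such a transition has occurred in the
  new block with probability \<open>> 1 - 1/n\<close>, append an \<open>a\<close>, and repeat. Since the run over a prefix
  does not depend on the rest of the word, the limit word has infinitely many \<open>a\<close>'s and still
  almost surely infinitely many heavy transitions, so \<open>B\<close> gives it value \<open>\<ge> 1/2\<close> instead of 0.

  For PosLimInf the same diagonal argument applies to the automaton with weight 1 on \<open>b\<close>: a
  complement has value 0 on eventually-\<open>b\<close> words, hence almost surely infinitely many transitions
  of weight \<open>< 1/2\<close> there, and the diagonal word forces value \<open>\<le> 1/2\<close> where 1 is required.
\<close>

lemma measurable_compose_countable2:
  fixes f :: "'a \<Rightarrow> 'b::countable" and g :: "'a \<Rightarrow> 'c::countable"
  assumes "f \<in> M \<rightarrow>\<^sub>M count_space UNIV" and "g \<in> M \<rightarrow>\<^sub>M count_space UNIV"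
    and "\<And>x y. h x y \<in> space N"
  shows "(\<lambda>z. h (f z) (g z)) \<in> M \<rightarrow>\<^sub>M N"
proof (rule measurable_compose_countable[OF _ assms(1)])
  show "(\<lambda>z. h x (g z)) \<in> M \<rightarrow>\<^sub>M N" for x
    using assms(3) by (rule measurable_compose_countable[OF measurable_const assms(2)])
qed

lemma down_closed_real_Sup:
  fixes S :: "real set"
  assumes down: "\<forall>y\<in>S. \<forall>x\<le>y. x \<in> S" and "s \<in> S" and bound: "\<forall>x\<in>S. x \<le> M"
  shows "c < Sup S \<Longrightarrow> c \<in> S" and "c \<in> S \<Longrightarrow> c \<le> Sup S"
proof -
  have "S \<noteq> {}"
    using \<open>s \<in> S\<close> by blast
  moreover have "bdd_above S"
    using bound by (auto simp: bdd_above_def)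
  ultimately show "c < Sup S \<Longrightarrow> c \<in> S"
    using down less_cSup_iff[of S c] by (meson less_imp_le)
  show "c \<in> S \<Longrightarrow> c \<le> Sup S"
    by (rule cSup_upper[OF _ \<open>bdd_above S\<close>])
qed

lemma one_le_of_ge_one_minus_inverse_Suc:
  fixes p :: real
  assumes "\<And>j. J \<le> j \<Longrightarrow> 1 - 1 / real (Suc j) \<le> p"
  shows "1 \<le> p"
proof (rule LIMSEQ_le_const2)
  show "(\<lambda>j. 1 - 1 / real (Suc j)) \<longlonglongrightarrow> 1"
    using tendsto_diff[OF tendsto_const LIMSEQ_inverse_real_of_nat, of 1]
    by (simp add: inverse_eq_divide)
qed (use assms in blast)

lemma less_LimsupD:
  fixes f :: "'b \<Rightarrow> 'a::complete_linorder"
  assumes "y < Limsup F f"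
  shows "\<exists>\<^sub>F x in F. y < f x"
proof (rule ccontr)
  assume "\<not> ?thesis"
  then have "\<forall>\<^sub>F x in F. f x \<le> y"
    by (simp add: not_frequently not_less)
  then have "Limsup F f \<le> y"
    by (rule Limsup_bounded)
  with assms show False
    by simp
qed

lemma frequently_le_imp_le_Limsup:
  fixes f :: "'b \<Rightarrow> 'a::complete_linorder"
  assumes "\<exists>\<^sub>F x in F. y \<le> f x"
  shows "y \<le> Limsup F f"
proof (rule ccontr)
  assume "\<not> ?thesis"
  then have "\<forall>\<^sub>F x in F. f x < y"
    by (intro Limsup_lessD) simp
  then have "\<not> (\<exists>\<^sub>F x in F. y \<le> f x)"
    by (simp add: not_frequently not_le)
  with assms show False
    by contradiction
qed

lemma Liminf_lessD:
  fixes f :: "'b \<Rightarrow> 'a::complete_linorder"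
  assumes "Liminf F f < y"
  shows "\<exists>\<^sub>F x in F. f x < y"
proof (rule ccontr)
  assume "\<not> ?thesis"
  then have "\<forall>\<^sub>F x in F. y \<le> f x"
    by (simp add: not_frequently not_less)
  then have "y \<le> Liminf F f"
    by (rule Liminf_bounded)
  with assms show False
    by simp
qed

lemma frequently_le_imp_Liminf_le:
  fixes f :: "'b \<Rightarrow> 'a::complete_linorder"
  assumes "\<exists>\<^sub>F x in F. f x \<le> y"
  shows "Liminf F f \<le> y"
proof (rule ccontr)
  assume "\<not> ?thesis"
  then have "\<forall>\<^sub>F x in F. y < f x"
    by (intro less_LiminfD) simp
  then have "\<not> (\<exists>\<^sub>F x in F. f x \<le> y)"
    by (simp add: not_frequently not_le)
  with assms show False
    by contradiction
qed

lemma limsup_indicator: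
  "limsup (\<lambda>n. ereal (if P n then 1 else 0)) = ereal (if \<exists>\<^sub>F n in sequentially. P n then 1 else 0)"
proof (cases "\<exists>\<^sub>F n in sequentially. P n")
  case True
  then have "\<exists>\<^sub>F n in sequentially. 1 \<le> ereal (if P n then 1 else 0)"
    by (rule frequently_elim1) simp
  then have "1 \<le> limsup (\<lambda>n. ereal (if P n then 1 else 0))"
    by (rule frequently_le_imp_le_Limsup)
  moreover have "limsup (\<lambda>n. ereal (if P n then 1 else 0)) \<le> 1"
    by (rule Limsup_bounded, rule always_eventually) simp
  ultimately show ?thesis
    using True by simp
next
  case False
  then have "\<forall>\<^sub>F n in sequentially. ereal (if P n then 1 else 0) \<le> 0"
    unfolding not_frequently by (rule eventually_mono) simp
  then have "limsup (\<lambda>n. ereal (if P n then 1 else 0)) \<le> 0"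
    by (rule Limsup_bounded)
  moreover have "0 \<le> limsup (\<lambda>n. ereal (if P n then 1 else 0))"
    by (rule le_Limsup, simp, rule always_eventually) simp
  ultimately show ?thesis
    using False by simp
qed

lemma liminf_indicator:
  "liminf (\<lambda>n. ereal (if P n then 1 else 0)) = ereal (if \<forall>\<^sub>F n in sequentially. P n then 1 else 0)"
proof (cases "\<forall>\<^sub>F n in sequentially. P n")
  case True
  then have "\<forall>\<^sub>F n in sequentially. 1 \<le> ereal (if P n then 1 else 0)"
    by (rule eventually_mono) simp
  then have "1 \<le> liminf (\<lambda>n. ereal (if P n then 1 else 0))"
    by (rule Liminf_bounded)
  moreover have "liminf (\<lambda>n. ereal (if P n then 1 else 0)) \<le> 1"
    by (rule Liminf_le, simp, rule always_eventually) simp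
  ultimately show ?thesis
    using True by simp
next
  case False
  then have "\<exists>\<^sub>F n in sequentially. ereal (if P n then 1 else 0) \<le> 0"
    unfolding not_eventually by (rule frequently_elim1) simp
  then have "liminf (\<lambda>n. ereal (if P n then 1 else 0)) \<le> 0"
    by (rule frequently_le_imp_Liminf_le)
  moreover have "0 \<le> liminf (\<lambda>n. ereal (if P n then 1 else 0))"
    by (rule Liminf_bounded, rule always_eventually) simp
  ultimately show ?thesis
    using False by simp
qed

section \<open>Runs as functions of independent choices\<close>

text \<open>
  An outcome \<open>\<omega>\<close> fixes in advance the initial state and, for every step \<open>i\<close>, state \<open>q\<close> and letter
  \<open>\<sigma>\<close>, the successor taken in that situation; the run over a word reads off the relevant choices.
  The step index makes choices at different steps independent. The probability space does not
  depend on the word, so runs over different words are coupled, and runs over two words agree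
  as long as the words do.
\<close>

type_synonym 's choices = "(nat \<times> nat \<times> 's) option \<Rightarrow> nat"

definition choice_pmf :: "'s pwa \<Rightarrow> (nat \<times> nat \<times> 's) option \<Rightarrow> nat pmf" where
  "choice_pmf A k = (case k of None \<Rightarrow> init A | Some (i, q, \<sigma>) \<Rightarrow> trans A q \<sigma>)"

definition choice_space :: "'s pwa \<Rightarrow> 's choices measure" where
  "choice_space A = PiM UNIV (\<lambda>k. measure_pmf (choice_pmf A k))"

primrec run_of :: "'s pwa \<Rightarrow> (nat \<Rightarrow> 's) \<Rightarrow> 's choices \<Rightarrow> nat \<Rightarrow> nat" where
  "run_of A w \<omega> 0 = \<omega> None"
| "run_of A w \<omega> (Suc i) = \<omega> (Some (i, run_of A w \<omega> i, w i))"

lemma prob_space_choice_space: "prob_space (choice_space A)"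
  unfolding choice_space_def by (intro prob_space_PiM prob_space_measure_pmf)

lemma space_choice_space [simp]: "space (choice_space A) = UNIV"
  by (simp add: choice_space_def space_PiM)

lemma measurable_choice [measurable]:
  "(\<lambda>\<omega>. \<omega> k) \<in> measurable (choice_space A) (count_space UNIV)"
  using measurable_component_singleton[of k UNIV "\<lambda>k. measure_pmf (choice_pmf A k)"]
  by (simp add: choice_space_def measurable_def)

lemma measurable_run_of [measurable]:
  "(\<lambda>\<omega>. run_of A w \<omega> i) \<in> measurable (choice_space A) (count_space UNIV)"
proof (induction i)
  case (Suc i)
  show ?case
    using measurable_compose_countable[where f="\<lambda>q \<omega>. \<omega> (Some (i, q, w i))", OF measurable_choice Suc]
    by simp
qed simp

lemma space_run_space [simp]: "space run_space = UNIV"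
  by (simp add: run_space_def space_PiM)

lemma measurable_run_space_component [measurable]:
  "(\<lambda>r. r i) \<in> measurable run_space (count_space UNIV)"
  unfolding run_space_def by (rule measurable_component_singleton) simp

lemma run_of_measurable: "run_of A w \<in> measurable (choice_space A) run_space"
  unfolding run_space_def by (rule measurable_PiM_single') (simp_all add: space_PiM)

lemma run_of_cong: "\<forall>i<n. w i = w' i \<Longrightarrow> t \<le> n \<Longrightarrow> run_of A w \<omega> t = run_of A w' \<omega> t"
  by (induction t) auto

lemma run_of_prefix_iff:
  "(\<forall>i\<le>n. run_of A w \<omega> i = qs i) \<longleftrightarrow>
     \<omega> None = qs 0 \<and> (\<forall>i<n. \<omega> (Some (i, qs i, w i)) = qs (Suc i))"
  by (induction n) (auto simp: le_Suc_eq less_Suc_eq)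

lemma emeasure_run_of_prefix:
  fixes A :: "'s pwa"
  shows "emeasure (choice_space A) {\<omega>. \<forall>i\<le>n. run_of A w \<omega> i = qs i} =
     ennreal (pmf (init A) (qs 0) * (\<Prod>i<n. pmf (trans A (qs i) (w i)) (qs (Suc i))))"
proof -
  define J where "J = insert None ((\<lambda>i. Some (i, qs i, w i)) ` {..<n})"
  define X :: "(nat \<times> nat \<times> 's) option \<Rightarrow> nat set"
    where "X k = {case k of None \<Rightarrow> qs 0 | Some (i, _, _) \<Rightarrow> qs (Suc i)}" for k
  have "{\<omega>. \<forall>i\<le>n. run_of A w \<omega> i = qs i} =
      prod_emb UNIV (\<lambda>k. measure_pmf (choice_pmf A k)) J (PiE J X)"
    by (auto simp: run_of_prefix_iff prod_emb_def J_def X_def PiE_iff)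
  then have "emeasure (choice_space A) {\<omega>. \<forall>i\<le>n. run_of A w \<omega> i = qs i} =
      (\<Prod>k\<in>J. emeasure (measure_pmf (choice_pmf A k)) (X k))"
    unfolding choice_space_def
    by (simp add: emeasure_PiM_emb prob_space_measure_pmf J_def)
  also have "\<dots> = emeasure (measure_pmf (init A)) {qs 0} *
      (\<Prod>i<n. emeasure (measure_pmf (trans A (qs i) (w i))) {qs (Suc i)})"
    unfolding J_def by (subst prod.insert) (auto simp: prod.reindex inj_on_def X_def choice_pmf_def)
  also have "\<dots> = ennreal (pmf (init A) (qs 0) * (\<Prod>i<n. pmf (trans A (qs i) (w i)) (qs (Suc i))))"
    by (simp add: emeasure_pmf_single prod_ennreal ennreal_mult prod_nonneg)
  finally show ?thesis .
qed

lemma cylinder_in_run_space: "{r. \<forall>i\<le>n. r i = qs i} \<in> sets run_space"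
proof -
  have "Measurable.pred run_space (\<lambda>r. \<forall>i\<le>n. r i = qs i)"
    by measurable
  then show ?thesis
    by (simp add: Measurable.pred_def)
qed

lemma run_space_finitely_determined_decomp:
  assumes "\<And>r r'. \<forall>i\<le>n. r i = r' i \<Longrightarrow> r \<in> E \<Longrightarrow> r' \<in> E"
  shows "E = (\<Union>xs\<in>{xs. length xs = Suc n \<and> (!) xs \<in> E}. {r. \<forall>i\<le>n. r i = xs ! i})"
proof (intro set_eqI iffI)
  fix r assume "r \<in> E"
  define xs where "xs = map r [0..<Suc n]"
  have agree: "\<forall>i\<le>n. r i = xs ! i"
    by (simp add: xs_def nth_map_upt del: upt_Suc)
  have "(!) xs \<in> E" "length xs = Suc n"
    using assms[OF agree \<open>r \<in> E\<close>] by (simp_all add: xs_def)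
  with agree show "r \<in> (\<Union>xs\<in>{xs. length xs = Suc n \<and> (!) xs \<in> E}. {r. \<forall>i\<le>n. r i = xs ! i})"
    by blast
next
  fix r assume "r \<in> (\<Union>xs\<in>{xs. length xs = Suc n \<and> (!) xs \<in> E}. {r. \<forall>i\<le>n. r i = xs ! i})"
  then obtain xs where "(!) xs \<in> E" "\<forall>i\<le>n. xs ! i = r i"
    by auto
  then show "r \<in> E"
    using assms by blast
qed

lemma emeasure_run_space_finitely_determined:
  assumes "sets M = sets run_space"
    and "\<And>r r'. \<forall>i\<le>n. r i = r' i \<Longrightarrow> r \<in> E \<Longrightarrow> r' \<in> E"
  shows "emeasure M E = (\<integral>\<^sup>+xs. emeasure M {r. \<forall>i\<le>n. r i = xs ! i}
           \<partial>count_space {xs. length xs = Suc n \<and> (!) xs \<in> E})"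
proof -
  let ?L = "{xs. length xs = Suc n \<and> (!) xs \<in> E}"
  have "disjoint_family_on (\<lambda>xs. {r. \<forall>i\<le>n. r i = xs ! i}) ?L"
    by (auto simp: disjoint_family_on_def intro: nth_equalityI)
  have "emeasure M E = emeasure M (\<Union>xs\<in>?L. {r. \<forall>i\<le>n. r i = xs ! i})"
    by (rule arg_cong[OF run_space_finitely_determined_decomp[OF assms(2)]])
  also have "\<dots> = (\<integral>\<^sup>+xs. emeasure M {r. \<forall>i\<le>n. r i = xs ! i} \<partial>count_space ?L)"
    using \<open>disjoint_family_on _ ?L\<close>
    by (intro emeasure_UN_countable) (auto simp: assms(1) cylinder_in_run_space)
  finally show ?thesis .
qed

lemma measure_eq_run_space_cylinders:
  assumes M: "sets M = sets run_space" and N: "sets N = sets run_space" and "finite_measure M"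
    and cylinders: "\<And>n qs. emeasure M {r. \<forall>i\<le>n. r i = qs i} = emeasure N {r. \<forall>i\<le>n. r i = qs i}"
  shows "M = N"
proof (rule measure_eqI_PiM_infinite)
  show "sets M = sets (PiM UNIV (\<lambda>_. count_space UNIV))" "sets N = sets (PiM UNIV (\<lambda>_. count_space UNIV))"
    using M N by (simp_all add: run_space_def)
  fix J :: "nat set" and X :: "nat \<Rightarrow> nat set"
  assume "finite J"
  define n where "n = Max (insert 0 J)"
  have determined: "r' \<in> prod_emb UNIV (\<lambda>_. count_space UNIV) J (PiE J X)"
    if "\<forall>i\<le>n. r i = r' i" "r \<in> prod_emb UNIV (\<lambda>_. count_space UNIV) J (PiE J X)" for r r'
    using that \<open>finite J\<close> by (auto simp: n_def prod_emb_def PiE_iff)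
  show "emeasure M (prod_emb UNIV (\<lambda>_. count_space UNIV) J (PiE J X)) =
        emeasure N (prod_emb UNIV (\<lambda>_. count_space UNIV) J (PiE J X))"
    by (simp add: emeasure_run_space_finitely_determined[OF M determined]
        emeasure_run_space_finitely_determined[OF N determined] cylinders)
qed fact

lemma run_measure_eq_distr: "run_measure A w = distr (choice_space A) run_space (run_of A w)"
proof -
  define D where "D = distr (choice_space A) run_space (run_of A w)"
  let ?cylinder_prob = "\<lambda>n qs. pmf (init A) (qs 0) * (\<Prod>i<n. pmf (trans A (qs i) (w i)) (qs (Suc i)))"
  let ?P = "\<lambda>M. prob_space M \<and> sets M = sets run_space \<and>
     (\<forall>n qs. measure M {r \<in> space M. \<forall>i\<le>n. r i = qs i} = ?cylinder_prob n qs)"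
  have "prob_space D"
    unfolding D_def by (rule prob_space.prob_space_distr[OF prob_space_choice_space run_of_measurable])
  have emeasure_D: "emeasure D {r. \<forall>i\<le>n. r i = qs i} = ennreal (?cylinder_prob n qs)" for n qs
    by (simp add: D_def emeasure_distr run_of_measurable cylinder_in_run_space vimage_def
        emeasure_run_of_prefix)
  have "sets D = sets run_space" and space_D: "space D = UNIV"
    by (simp_all add: D_def)
  then have "?P D"
    using \<open>prob_space D\<close> emeasure_D by (simp add: measure_def prod_nonneg)
  moreover have "M = D" if "?P M" for M
  proof (rule measure_eq_run_space_cylinders)
    have "space M = UNIV"
      using that sets_eq_imp_space_eq[of M run_space] by simp
    then show "emeasure M {r. \<forall>i\<le>n. r i = qs i} = emeasure D {r. \<forall>i\<le>n. r i = qs i}" for n qs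
      using that emeasure_D by (simp add: finite_measure.emeasure_eq_measure[OF prob_space.finite_measure])
  qed (use that \<open>sets D = sets run_space\<close> in \<open>auto simp: prob_space.finite_measure\<close>)
  ultimately have "(THE M. ?P M) = D"
    by (rule the_equality)
  then show ?thesis
    unfolding run_measure_def D_def .
qed

section \<open>Thresholds of the two semantics\<close>

lemma measurable_weight_seq [measurable]: "weight_seq A w \<in> run_space \<rightarrow>\<^sub>M PiM UNIV (\<lambda>_. borel)"
proof (rule measurable_PiM_single')
  show "(\<lambda>r. weight_seq A w r i) \<in> borel_measurable run_space" for i
    unfolding weight_seq_def
    by (rule measurable_compose_countable2[where f="\<lambda>r. r i" and g="\<lambda>r. r (Suc i)"]) simp_all
qed (simp add: space_PiM)

definition value_function :: "((nat \<Rightarrow> real) \<Rightarrow> ereal) \<Rightarrow> bool" where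
  "value_function Val \<longleftrightarrow> Val \<in> borel_measurable (PiM UNIV (\<lambda>_. borel)) \<and>
     (\<forall>v m. (\<forall>i. \<bar>v i\<bar> \<le> m) \<longrightarrow> ereal (- m) \<le> Val v \<and> Val v \<le> ereal m)"

lemma value_function_LimSupV: "value_function LimSupV"
proof -
  have "ereal (- m) \<le> limsup (\<lambda>n. ereal (v n)) \<and> limsup (\<lambda>n. ereal (v n)) \<le> ereal m"
    if "\<forall>i. \<bar>v i\<bar> \<le> m" for v m
  proof -
    have "- m \<le> v i" "v i \<le> m" for i
      using spec[OF that, of i] by linarith+
    then show ?thesis
      by (intro conjI le_Limsup Limsup_bounded always_eventually) simp_all
  qed
  moreover have "(\<lambda>v. limsup (\<lambda>n. ereal (v n))) \<in> borel_measurable (PiM UNIV (\<lambda>_. borel))"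
    by measurable
  ultimately show ?thesis
    unfolding value_function_def LimSupV_def by blast
qed

lemma value_function_LimInfV: "value_function LimInfV"
proof -
  have "ereal (- m) \<le> liminf (\<lambda>n. ereal (v n)) \<and> liminf (\<lambda>n. ereal (v n)) \<le> ereal m"
    if "\<forall>i. \<bar>v i\<bar> \<le> m" for v m
  proof -
    have "- m \<le> v i" "v i \<le> m" for i
      using spec[OF that, of i] by linarith+
    then show ?thesis
      by (intro conjI Liminf_le Liminf_bounded always_eventually) simp_all
  qed
  moreover have "(\<lambda>v. liminf (\<lambda>n. ereal (v n))) \<in> borel_measurable (PiM UNIV (\<lambda>_. borel))"
    by measurable
  ultimately show ?thesis
    unfolding value_function_def LimInfV_def by blast
qed

abbreviation run_value :: "'s pwa \<Rightarrow> ((nat \<Rightarrow> real) \<Rightarrow> ereal) \<Rightarrow> (nat \<Rightarrow> 's) \<Rightarrow> 's choices \<Rightarrow> ereal" where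
  "run_value A Val w \<omega> \<equiv> Val (weight_seq A w (run_of A w \<omega>))"

lemma measurable_value_weight_seq:
  assumes "value_function Val"
  shows "(\<lambda>r. Val (weight_seq A w r)) \<in> borel_measurable run_space"
  by (rule measurable_compose[OF measurable_weight_seq]) (use assms in \<open>simp add: value_function_def\<close>)

lemma measurable_run_value:
  "value_function Val \<Longrightarrow> run_value A Val w \<in> borel_measurable (choice_space A)"
  by (rule measurable_compose[OF run_of_measurable measurable_value_weight_seq])

lemma measure_val_event:
  assumes "value_function Val"
  shows "measure (run_measure A w) (val_event A Val w \<eta>) =
    measure (choice_space A) {\<omega>. ereal \<eta> \<le> run_value A Val w \<omega>}"
proof -
  let ?E = "{r. ereal \<eta> \<le> Val (weight_seq A w r)}"
  note [measurable] = measurable_value_weight_seq[OF assms]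
  have "Measurable.pred run_space (\<lambda>r. ereal \<eta> \<le> Val (weight_seq A w r))"
    by measurable
  then have "?E \<in> sets run_space"
    by (simp add: Measurable.pred_def)
  have "val_event A Val w \<eta> = ?E"
    unfolding val_event_def run_measure_eq_distr space_distr space_run_space by simp
  then have "measure (run_measure A w) (val_event A Val w \<eta>) =
      measure (choice_space A) (run_of A w -` ?E \<inter> space (choice_space A))"
    unfolding run_measure_eq_distr using measure_distr[OF run_of_measurable \<open>?E \<in> sets run_space\<close>]
    by simp
  also have "run_of A w -` ?E \<inter> space (choice_space A) = {\<omega>. ereal \<eta> \<le> run_value A Val w \<omega>}"
    by auto
  finally show ?thesis .
qed

lemma run_value_ge_in_sets:
  assumes "value_function Val"
  shows "{\<omega>. ereal \<eta> \<le> run_value A Val w \<omega>} \<in> sets (choice_space A)"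
proof -
  have "run_value A Val w -` {ereal \<eta>..} \<inter> space (choice_space A) \<in> sets (choice_space A)"
    by (rule measurable_sets[OF measurable_run_value[OF assms]]) simp
  then show ?thesis
    by (simp add: vimage_def)
qed

lemma L_as_eq_Sup_AE:
  assumes "value_function Val"
  shows "L_as A Val w = Sup {\<eta>. AE \<omega> in choice_space A. ereal \<eta> \<le> run_value A Val w \<omega>}"
proof -
  have "measure (choice_space A) {\<omega>. ereal \<eta> \<le> run_value A Val w \<omega>} = 1 \<longleftrightarrow>
      (AE \<omega> in choice_space A. ereal \<eta> \<le> run_value A Val w \<omega>)" for \<eta>
    using prob_space.prob_Collect_eq_1[OF prob_space_choice_space[of A], where P="\<lambda>\<omega>. ereal \<eta> \<le> run_value A Val w \<omega>"]
      run_value_ge_in_sets[OF assms, of \<eta> A w] by simp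
  then show ?thesis
    unfolding L_as_def measure_val_event[OF assms] by simp
qed

lemma L_pos_eq_Sup_not_AE:
  assumes "value_function Val"
  shows "L_pos A Val w = Sup {\<eta>. \<not> (AE \<omega> in choice_space A. run_value A Val w \<omega> < ereal \<eta>)}"
proof -
  have "measure (choice_space A) {\<omega>. ereal \<eta> \<le> run_value A Val w \<omega>} = 0 \<longleftrightarrow>
      (AE \<omega> in choice_space A. run_value A Val w \<omega> < ereal \<eta>)" for \<eta>
  proof -
    have "measure (choice_space A) {\<omega>. ereal \<eta> \<le> run_value A Val w \<omega>} = 0 \<longleftrightarrow>
        (AE \<omega> in choice_space A. \<not> ereal \<eta> \<le> run_value A Val w \<omega>)"
      using prob_space.prob_Collect_eq_0[OF prob_space_choice_space[of A], where P="\<lambda>\<omega>. ereal \<eta> \<le> run_value A Val w \<omega>"]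
        run_value_ge_in_sets[OF assms, of \<eta> A w] by simp
    then show ?thesis
      by (simp only: not_le)
  qed
  then show ?thesis
    unfolding L_pos_def measure_val_event[OF assms] by (simp add: zero_less_measure_iff)
qed

lemma AE_run_of_in_states:
  fixes A :: "'s::finite pwa"
  assumes "wf_pwa A"
  shows "AE \<omega> in choice_space A. \<forall>i. run_of A w \<omega> i \<in> states A"
proof -
  have "AE \<omega> in choice_space A. \<omega> k \<in> set_pmf (choice_pmf A k)" for k
    unfolding choice_space_def
    by (rule AE_PiM_component) (simp_all add: prob_space_measure_pmf AE_measure_pmf)
  then have "AE \<omega> in choice_space A. \<forall>k. \<omega> k \<in> set_pmf (choice_pmf A k)"
    by (simp add: AE_all_countable)
  then show ?thesis
  proof (rule AE_mp, intro AE_I2 impI allI)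
    fix \<omega> i assume choices: "\<forall>k. \<omega> k \<in> set_pmf (choice_pmf A k)"
    show "run_of A w \<omega> i \<in> states A"
    proof (induction i)
      case 0
      show ?case
        using choices[rule_format, of None] assms by (auto simp: wf_pwa_def choice_pmf_def)
    next
      case (Suc i)
      have "\<omega> (Some (i, run_of A w \<omega> i, w i)) \<in> set_pmf (trans A (run_of A w \<omega> i) (w i))"
        using choices[rule_format, of "Some (i, run_of A w \<omega> i, w i)"] by (simp add: choice_pmf_def)
      with Suc assms show ?case
        by (auto simp: wf_pwa_def)
    qed
  qed
qed

lemma wf_pwa_weights_bounded:
  assumes "wf_pwa A"
  obtains m where "\<And>q \<sigma> q'. q \<in> states A \<Longrightarrow> q' \<in> states A \<Longrightarrow> \<bar>real_of_rat (weight A q \<sigma> q')\<bar> \<le> m"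
proof -
  have "finite ((\<lambda>(q, \<sigma>, q'). \<bar>real_of_rat (weight A q \<sigma> q')\<bar>) ` (states A \<times> UNIV \<times> states A))"
    using assms by (simp add: wf_pwa_def)
  then obtain m where "\<forall>x \<in> (\<lambda>(q, \<sigma>, q'). \<bar>real_of_rat (weight A q \<sigma> q')\<bar>) ` (states A \<times> UNIV \<times> states A). x \<le> m"
    using bdd_above_finite[unfolded bdd_above_def] by blast
  then show ?thesis
    by (intro that) force
qed

text \<open>
  Boundedness is what makes the threshold sets in the definitions of \<open>L_as\<close> and \<open>L_pos\<close> nonempty
  and bounded above, so that their real-valued \<open>Sup\<close> is not a junk value.
\<close>

lemma AE_run_value_bounded:
  fixes A :: "'s::finite pwa"
  assumes "wf_pwa A" and "value_function Val"
  obtains m where "\<And>w. AE \<omega> in choice_space A. ereal (- m) \<le> run_value A Val w \<omega> \<and> run_value A Val w \<omega> \<le> ereal m"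
proof -
  obtain m where m: "\<And>q \<sigma> q'. q \<in> states A \<Longrightarrow> q' \<in> states A \<Longrightarrow> \<bar>real_of_rat (weight A q \<sigma> q')\<bar> \<le> m"
    using wf_pwa_weights_bounded[OF assms(1)] by blast
  have "AE \<omega> in choice_space A. ereal (- m) \<le> run_value A Val w \<omega> \<and> run_value A Val w \<omega> \<le> ereal m" for w
    using AE_run_of_in_states[OF assms(1), of w]
  proof (rule AE_mp, intro AE_I2 impI)
    fix \<omega> assume "\<forall>i. run_of A w \<omega> i \<in> states A"
    then have "\<forall>i. \<bar>weight_seq A w (run_of A w \<omega>) i\<bar> \<le> m"
      unfolding weight_seq_def by (blast intro: m)
    then show "ereal (- m) \<le> run_value A Val w \<omega> \<and> run_value A Val w \<omega> \<le> ereal m"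
      using assms(2) by (simp add: value_function_def)
  qed
  then show ?thesis
    by (rule that)
qed

lemma
  fixes A :: "'s::finite pwa"
  assumes "wf_pwa A" and "value_function Val"
  shows L_as_gt_imp_AE: "c < L_as A Val w \<Longrightarrow> AE \<omega> in choice_space A. ereal c \<le> run_value A Val w \<omega>"
    and AE_imp_le_L_as: "(AE \<omega> in choice_space A. ereal c \<le> run_value A Val w \<omega>) \<Longrightarrow> c \<le> L_as A Val w"
proof -
  interpret prob_space "choice_space A"
    by (rule prob_space_choice_space)
  obtain m where bounded: "AE \<omega> in choice_space A. ereal (- m) \<le> run_value A Val w \<omega> \<and> run_value A Val w \<omega> \<le> ereal m"
    using AE_run_value_bounded[OF assms] by blast
  let ?S = "{\<eta>. AE \<omega> in choice_space A. ereal \<eta> \<le> run_value A Val w \<omega>}"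
  have S_mem: "- m \<in> ?S"
    unfolding mem_Collect_eq using bounded by eventually_elim simp
  have S_bound: "\<forall>\<eta>\<in>?S. \<eta> \<le> m"
  proof
    fix \<eta> assume "\<eta> \<in> ?S"
    with bounded have "AE \<omega> in choice_space A. ereal \<eta> \<le> ereal m"
      unfolding mem_Collect_eq by eventually_elim (elim conjE, erule order_trans, assumption)
    then show "\<eta> \<le> m"
      by (cases "\<eta> \<le> m") (simp_all add: AE_False)
  qed
  have S_down: "\<forall>y\<in>?S. \<forall>x\<le>y. x \<in> ?S"
  proof (intro ballI allI impI)
    fix x y assume "y \<in> ?S" "x \<le> y"
    then have "ereal x \<le> ereal y"
      by simp
    from \<open>y \<in> ?S\<close> show "x \<in> ?S"
      unfolding mem_Collect_eq by (rule eventually_mono) (erule order_trans[OF \<open>ereal x \<le> ereal y\<close>])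
  qed
  note S_Sup = down_closed_real_Sup[where S="?S", OF S_down S_mem S_bound,
    unfolded L_as_eq_Sup_AE[OF assms(2), symmetric] mem_Collect_eq]
  show "c < L_as A Val w \<Longrightarrow> AE \<omega> in choice_space A. ereal c \<le> run_value A Val w \<omega>"
    by (fact S_Sup(1))
  show "(AE \<omega> in choice_space A. ereal c \<le> run_value A Val w \<omega>) \<Longrightarrow> c \<le> L_as A Val w"
    by (fact S_Sup(2))
qed

lemma
  fixes A :: "'s::finite pwa"
  assumes "wf_pwa A" and "value_function Val"
  shows L_pos_gt_imp_not_AE:
      "c < L_pos A Val w \<Longrightarrow> \<not> (AE \<omega> in choice_space A. run_value A Val w \<omega> < ereal c)"
    and not_AE_imp_le_L_pos:
      "\<not> (AE \<omega> in choice_space A. run_value A Val w \<omega> < ereal c) \<Longrightarrow> c \<le> L_pos A Val w"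
proof -
  interpret prob_space "choice_space A"
    by (rule prob_space_choice_space)
  obtain m where bounded: "AE \<omega> in choice_space A. ereal (- m) \<le> run_value A Val w \<omega> \<and> run_value A Val w \<omega> \<le> ereal m"
    using AE_run_value_bounded[OF assms] by blast
  let ?T = "{\<eta>. \<not> (AE \<omega> in choice_space A. run_value A Val w \<omega> < ereal \<eta>)}"
  have T_mem: "- m \<in> ?T"
    unfolding mem_Collect_eq
  proof
    assume "AE \<omega> in choice_space A. run_value A Val w \<omega> < ereal (- m)"
    with bounded have "AE \<omega> in choice_space A. False"
      by eventually_elim auto
    then show False
      by (simp add: AE_False)
  qed
  have T_bound: "\<forall>\<eta>\<in>?T. \<eta> \<le> m"
  proof (rule ballI, rule ccontr)
    fix \<eta> assume "\<eta> \<in> ?T" "\<not> \<eta> \<le> m"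
    then have "ereal m < ereal \<eta>"
      by simp
    from bounded have "AE \<omega> in choice_space A. run_value A Val w \<omega> < ereal \<eta>"
      by eventually_elim (elim conjE, rule le_less_trans[OF _ \<open>ereal m < ereal \<eta>\<close>], assumption)
    with \<open>\<eta> \<in> ?T\<close> show False
      by simp
  qed
  have T_down: "\<forall>y\<in>?T. \<forall>x\<le>y. x \<in> ?T"
  proof (intro ballI allI impI)
    fix x y assume "y \<in> ?T" "x \<le> y"
    show "x \<in> ?T"
      unfolding mem_Collect_eq
    proof
      assume "AE \<omega> in choice_space A. run_value A Val w \<omega> < ereal x"
      moreover have "ereal x \<le> ereal y"
        using \<open>x \<le> y\<close> by simp
      ultimately have "AE \<omega> in choice_space A. run_value A Val w \<omega> < ereal y"
        by (elim eventually_mono) (erule less_le_trans)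
      with \<open>y \<in> ?T\<close> show False
        by simp
    qed
  qed
  note T_Sup = down_closed_real_Sup[where S="?T", OF T_down T_mem T_bound,
    unfolded L_pos_eq_Sup_not_AE[OF assms(2), symmetric] mem_Collect_eq]
  show "c < L_pos A Val w \<Longrightarrow> \<not> (AE \<omega> in choice_space A. run_value A Val w \<omega> < ereal c)"
    by (fact T_Sup(1))
  show "\<not> (AE \<omega> in choice_space A. run_value A Val w \<omega> < ereal c) \<Longrightarrow> c \<le> L_pos A Val w"
    by (fact T_Sup(2))
qed

lemma
  assumes "\<And>r. Val (weight_seq A w r) = ereal c"
  shows L_as_const: "L_as A Val w = c" and L_pos_const: "L_pos A Val w = c"
proof -
  interpret prob_space "run_measure A w"
    unfolding run_measure_eq_distr
    by (rule prob_space.prob_space_distr[OF prob_space_choice_space run_of_measurable])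
  have "val_event A Val w \<eta> = (if \<eta> \<le> c then space (run_measure A w) else {})" for \<eta>
    by (auto simp: val_event_def assms)
  then have "{\<eta>. prob (val_event A Val w \<eta>) = 1} = {..c}" "{\<eta>. prob (val_event A Val w \<eta>) > 0} = {..c}"
    by (auto simp: prob_space)
  then show "L_as A Val w = c" "L_pos A Val w = c"
    by (simp_all add: L_as_def L_pos_def)
qed

definition letter_pwa :: "'s \<Rightarrow> 's pwa" where
  "letter_pwa x = \<lparr>states = {0}, init = return_pmf 0, trans = (\<lambda>_ _. return_pmf 0),
     weight = (\<lambda>_ \<sigma> _. if \<sigma> = x then 1 else 0)\<rparr>"

lemma wf_letter_pwa: "wf_pwa (letter_pwa (x :: 's::finite))"
  by (simp add: wf_pwa_def letter_pwa_def)

lemma weight_seq_letter_pwa: "weight_seq (letter_pwa x) w r = (\<lambda>i. if w i = x then 1 else 0)"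
  by (simp add: weight_seq_def letter_pwa_def fun_eq_iff)

lemma L_as_letter_pwa_LimSupV:
  "L_as (letter_pwa x) LimSupV w = (if \<exists>\<^sub>F i in sequentially. w i = x then 1 else 0)"
  by (rule L_as_const) (simp add: LimSupV_def weight_seq_letter_pwa limsup_indicator)

lemma L_pos_letter_pwa_LimInfV:
  "L_pos (letter_pwa x) LimInfV w = (if \<forall>\<^sub>F i in sequentially. w i = x then 1 else 0)"
  by (rule L_pos_const) (simp add: LimInfV_def weight_seq_letter_pwa liminf_indicator)

lemma not_frequently_a_iff: "\<not> (\<exists>\<^sub>F i in F. w i = a) \<longleftrightarrow> (\<forall>\<^sub>F i in F. w i = b)"
proof -
  have "w i \<noteq> a \<longleftrightarrow> w i = b" for i
    by (cases "w i") simp_all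
  then show ?thesis
    by (simp add: not_frequently)
qed

section \<open>The diagonal word\<close>

definition padded :: "'s \<Rightarrow> 's list \<Rightarrow> nat \<Rightarrow> 's" where
  "padded y p i = (if i < length p then p ! i else y)"

definition diagonal_prefix :: "('s list \<Rightarrow> nat) \<Rightarrow> 's \<Rightarrow> 's \<Rightarrow> nat \<Rightarrow> 's list" where
  "diagonal_prefix K x y j = ((\<lambda>p. p @ replicate (K p) y @ [x]) ^^ j) []"

definition diagonal_word :: "('s list \<Rightarrow> nat) \<Rightarrow> 's \<Rightarrow> 's \<Rightarrow> nat \<Rightarrow> 's" where
  "diagonal_word K x y i = diagonal_prefix K x y (Suc i) ! i"

lemma eventually_padded: "\<forall>\<^sub>F i in sequentially. padded y p i = y"
  unfolding eventually_sequentially padded_def by (intro exI[of _ "length p"]) simp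

lemma diagonal_prefix_Suc:
  "diagonal_prefix K x y (Suc j) = diagonal_prefix K x y j @ replicate (K (diagonal_prefix K x y j)) y @ [x]"
  by (simp add: diagonal_prefix_def)

lemma length_diagonal_prefix: "j \<le> length (diagonal_prefix K x y j)"
  by (induction j) (simp_all add: diagonal_prefix_Suc)

lemma diagonal_prefix_prefix: "j \<le> m \<Longrightarrow> \<exists>zs. diagonal_prefix K x y m = diagonal_prefix K x y j @ zs"
proof (induction m rule: dec_induct)
  case (step m)
  then obtain zs where "diagonal_prefix K x y m = diagonal_prefix K x y j @ zs"
    by blast
  then show ?case
    by (simp add: diagonal_prefix_Suc)
qed simp

lemma diagonal_word_nth:
  assumes "i < length (diagonal_prefix K x y j)"
  shows "diagonal_word K x y i = diagonal_prefix K x y j ! i"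
proof (cases "j \<le> Suc i")
  case True
  then obtain zs where "diagonal_prefix K x y (Suc i) = diagonal_prefix K x y j @ zs"
    using diagonal_prefix_prefix by metis
  then show ?thesis
    using assms by (simp add: diagonal_word_def nth_append)
next
  case False
  then have "Suc i \<le> j"
    by simp
  then obtain zs where "diagonal_prefix K x y j = diagonal_prefix K x y (Suc i) @ zs"
    using diagonal_prefix_prefix by metis
  moreover have "i < length (diagonal_prefix K x y (Suc i))"
    using length_diagonal_prefix[of "Suc i" K x y] by simp
  ultimately show ?thesis
    by (simp add: diagonal_word_def nth_append)
qed

lemma diagonal_word_eq_padded:
  "\<forall>i < length (diagonal_prefix K x y j) + K (diagonal_prefix K x y j).
     diagonal_word K x y i = padded y (diagonal_prefix K x y j) i"
proof (intro allI impI)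
  let ?p = "diagonal_prefix K x y j"
  fix i assume i: "i < length ?p + K ?p"
  then have "diagonal_word K x y i = diagonal_prefix K x y (Suc j) ! i"
    by (intro diagonal_word_nth) (simp add: diagonal_prefix_Suc)
  also have "\<dots> = padded y ?p i"
    using i by (auto simp: diagonal_prefix_Suc padded_def nth_append)
  finally show "diagonal_word K x y i = padded y ?p i" .
qed

lemma frequently_diagonal_word: "\<exists>\<^sub>F i in sequentially. diagonal_word K x y i = x"
  unfolding frequently_sequentially
proof
  fix N
  let ?p = "diagonal_prefix K x y N"
  have "diagonal_word K x y (length ?p + K ?p) = x"
    by (subst diagonal_word_nth[of _ _ _ _ "Suc N"]) (simp_all add: diagonal_prefix_Suc nth_append)
  moreover have "N \<le> length ?p + K ?p"
    using length_diagonal_prefix[of N K x y] by simp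
  ultimately show "\<exists>i\<ge>N. diagonal_word K x y i = x"
    by blast
qed

section \<open>Almost surely infinitely many marked transitions\<close>

definition hit_event ::
    "'s pwa \<Rightarrow> (nat \<Rightarrow> 's \<Rightarrow> nat \<Rightarrow> bool) \<Rightarrow> (nat \<Rightarrow> 's) \<Rightarrow> nat set \<Rightarrow> 's choices set"
  where "hit_event A G w I = {\<omega>. \<exists>i\<in>I. G (run_of A w \<omega> i) (w i) (run_of A w \<omega> (Suc i))}"

lemma hit_event_in_sets: "hit_event A G w I \<in> sets (choice_space A)"
proof -
  have "(\<lambda>\<omega>. G (run_of A w \<omega> i) (w i) (run_of A w \<omega> (Suc i))) \<in> choice_space A \<rightarrow>\<^sub>M count_space UNIV" for i
    by (rule measurable_compose_countable2[OF measurable_run_of measurable_run_of]) simp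
  then have "{\<omega> \<in> space (choice_space A). G (run_of A w \<omega> i) (w i) (run_of A w \<omega> (Suc i))} \<in> sets (choice_space A)" for i
    by (simp add: pred_def)
  then have "{\<omega> \<in> space (choice_space A). \<exists>i\<in>I. G (run_of A w \<omega> i) (w i) (run_of A w \<omega> (Suc i))} \<in> sets (choice_space A)"
    by (rule sets.sets_Collect_countable_Ex') simp
  then show ?thesis
    by (simp add: hit_event_def)
qed

lemma hit_event_cong:
  assumes "\<forall>i<n. w i = w' i" and "I \<subseteq> {..<n}"
  shows "hit_event A G w I = hit_event A G w' I"
proof -
  have "G (run_of A w \<omega> i) (w i) (run_of A w \<omega> (Suc i)) = G (run_of A w' \<omega> i) (w' i) (run_of A w' \<omega> (Suc i))"
    if "i \<in> I" for i \<omega>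
  proof -
    have "Suc i \<le> n"
      using that assms(2) by auto
    then have "run_of A w \<omega> i = run_of A w' \<omega> i"
      by (intro run_of_cong[OF assms(1)]) simp
    moreover have "w i = w' i"
      using \<open>Suc i \<le> n\<close> assms(1) by simp
    ultimately show ?thesis
      by simp
  qed
  then show ?thesis
    unfolding hit_event_def by blast
qed

lemma AE_frequently_imp_hit_window:
  assumes "AE \<omega> in choice_space A. \<exists>\<^sub>F i in sequentially. G (run_of A w \<omega> i) (w i) (run_of A w \<omega> (Suc i))"
    and "0 < e"
  shows "\<exists>K. 1 - e < measure (choice_space A) (hit_event A G w {s..<s + K})"
proof -
  interpret prob_space "choice_space A"
    by (rule prob_space_choice_space)
  have "incseq (\<lambda>K. hit_event A G w {s..<s + K})"
    by (auto simp: incseq_def hit_event_def)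
  then have "(\<lambda>K. prob (hit_event A G w {s..<s + K})) \<longlonglongrightarrow> prob (\<Union>K. hit_event A G w {s..<s + K})"
    by (intro finite_Lim_measure_incseq) (auto simp: hit_event_in_sets)
  also have "(\<Union>K. hit_event A G w {s..<s + K}) = hit_event A G w {s..}"
    by (auto simp: hit_event_def) (metis add_Suc_right atLeastLessThan_iff le_add_diff_inverse less_Suc_eq)
  also have "prob (hit_event A G w {s..}) = 1"
  proof -
    from assms(1) have "AE \<omega> in choice_space A. \<omega> \<in> hit_event A G w {s..}"
      by eventually_elim (auto simp: hit_event_def frequently_sequentially)
    then show ?thesis
      using AE_in_set_eq_1[OF hit_event_in_sets] by blast
  qed
  finally have "\<forall>\<^sub>F K in sequentially. 1 - e < prob (hit_event A G w {s..<s + K})"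
    by (rule order_tendstoD) (use assms(2) in simp)
  then show ?thesis
    by (auto dest: eventually_happens)
qed

lemma AE_frequently_diagonal_word:
  fixes A :: "'s pwa" and G :: "nat \<Rightarrow> 's \<Rightarrow> nat \<Rightarrow> bool" and x y :: 's
  assumes eventually_y: "\<And>v. (\<forall>\<^sub>F i in sequentially. v i = y) \<Longrightarrow>
      AE \<omega> in choice_space A. \<exists>\<^sub>F i in sequentially. G (run_of A v \<omega> i) (v i) (run_of A v \<omega> (Suc i))"
  shows "\<exists>w. (\<exists>\<^sub>F i in sequentially. w i = x) \<and>
      (AE \<omega> in choice_space A. \<exists>\<^sub>F i in sequentially. G (run_of A w \<omega> i) (w i) (run_of A w \<omega> (Suc i)))"
proof -
  interpret prob_space "choice_space A"
    by (rule prob_space_choice_space)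
  have "\<exists>K. 1 - 1 / real (Suc (length p)) < prob (hit_event A G (padded y p) {length p..<length p + K})" for p
    by (rule AE_frequently_imp_hit_window[OF eventually_y[OF eventually_padded]]) simp
  then obtain K where K: "\<And>p. 1 - 1 / real (Suc (length p)) <
      prob (hit_event A G (padded y p) {length p..<length p + K p})"
    by metis
  let ?p = "diagonal_prefix K x y" and ?w = "diagonal_word K x y"
  have "AE \<omega> in choice_space A. \<omega> \<in> hit_event A G ?w {J..}" for J
  proof (rule AE_prob_1, rule antisym[OF prob_le_1], rule one_le_of_ge_one_minus_inverse_Suc)
    fix j assume "J \<le> j"
    let ?window = "{length (?p j)..<length (?p j) + K (?p j)}"
    have "hit_event A G ?w ?window = hit_event A G (padded y (?p j)) ?window"
      by (rule hit_event_cong[OF diagonal_word_eq_padded]) auto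
    then have "1 - 1 / real (Suc (length (?p j))) < prob (hit_event A G ?w ?window)"
      using K by simp
    moreover have "1 / real (Suc (length (?p j))) \<le> 1 / real (Suc j)"
      using length_diagonal_prefix[of j K x y] by (intro frac_le) simp_all
    moreover have "prob (hit_event A G ?w ?window) \<le> prob (hit_event A G ?w {J..})"
      by (rule finite_measure_mono[OF _ hit_event_in_sets])
        (use \<open>J \<le> j\<close> length_diagonal_prefix[of j K x y] in \<open>auto simp: hit_event_def\<close>)
    ultimately show "1 - 1 / real (Suc j) \<le> prob (hit_event A G ?w {J..})"
      by linarith
  qed
  then have "AE \<omega> in choice_space A. \<forall>J. \<omega> \<in> hit_event A G ?w {J..}"
    by (simp add: AE_all_countable)
  then have "AE \<omega> in choice_space A. \<exists>\<^sub>F i in sequentially. G (run_of A ?w \<omega> i) (?w i) (run_of A ?w \<omega> (Suc i))"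
    by eventually_elim (auto simp: hit_event_def frequently_sequentially)
  with frequently_diagonal_word[of K x y] show ?thesis
    by blast
qed

lemma L_as_LimSupV_ne_complement_letter_a:
  fixes B :: "ab pwa"
  assumes "wf_pwa B"
  shows "(\<lambda>w. L_as B LimSupV w) \<noteq> (\<lambda>w. 1 - L_as (letter_pwa a) LimSupV w)"
proof
  assume "(\<lambda>w. L_as B LimSupV w) = (\<lambda>w. 1 - L_as (letter_pwa a) LimSupV w)"
  then have L_B: "L_as B LimSupV w = (if \<exists>\<^sub>F i in sequentially. w i = a then 0 else 1)" for w
    by (simp add: fun_eq_iff L_as_letter_pwa_LimSupV)
  let ?G = "\<lambda>q \<sigma> q'. 1 / 2 < real_of_rat (weight B q \<sigma> q')"
  have eventually_b_AE: "AE \<omega> in choice_space B. \<exists>\<^sub>F i in sequentially. ?G (run_of B v \<omega> i) (v i) (run_of B v \<omega> (Suc i))"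
    if "\<forall>\<^sub>F i in sequentially. v i = b" for v
  proof -
    have "3 / 4 < L_as B LimSupV v"
      using that L_B[of v] by (simp add: not_frequently_a_iff[symmetric])
    then have "AE \<omega> in choice_space B. ereal (3 / 4) \<le> run_value B LimSupV v \<omega>"
      by (rule L_as_gt_imp_AE[OF assms value_function_LimSupV])
    then show ?thesis
    proof eventually_elim
      fix \<omega> assume "ereal (3 / 4) \<le> run_value B LimSupV v \<omega>"
      then have "ereal (1 / 2) < limsup (\<lambda>n. ereal (weight_seq B v (run_of B v \<omega>) n))"
        unfolding LimSupV_def by (rule less_le_trans[rotated]) simp
      then show "\<exists>\<^sub>F i in sequentially. ?G (run_of B v \<omega> i) (v i) (run_of B v \<omega> (Suc i))"
        by (auto simp: weight_seq_def dest: less_LimsupD)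
    qed
  qed
  obtain w where frequently_a: "\<exists>\<^sub>F i in sequentially. w i = a"
    and AE_G: "AE \<omega> in choice_space B. \<exists>\<^sub>F i in sequentially. ?G (run_of B w \<omega> i) (w i) (run_of B w \<omega> (Suc i))"
    using AE_frequently_diagonal_word[where x=a, OF eventually_b_AE] by blast
  from AE_G have "AE \<omega> in choice_space B. ereal (1 / 2) \<le> run_value B LimSupV w \<omega>"
  proof (rule eventually_mono)
    fix \<omega> assume "\<exists>\<^sub>F i in sequentially. ?G (run_of B w \<omega> i) (w i) (run_of B w \<omega> (Suc i))"
    then have "\<exists>\<^sub>F i in sequentially. ereal (1 / 2) \<le> ereal (weight_seq B w (run_of B w \<omega>) i)"
      by (rule frequently_elim1) (simp add: weight_seq_def)
    then show "ereal (1 / 2) \<le> run_value B LimSupV w \<omega>"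
      unfolding LimSupV_def by (rule frequently_le_imp_le_Limsup)
  qed
  then have "1 / 2 \<le> L_as B LimSupV w"
    by (rule AE_imp_le_L_as[OF assms value_function_LimSupV])
  with L_B[of w] frequently_a show False
    by simp
qed

lemma L_pos_LimInfV_ne_complement_letter_b:
  fixes B :: "ab pwa"
  assumes "wf_pwa B"
  shows "(\<lambda>w. L_pos B LimInfV w) \<noteq> (\<lambda>w. 1 - L_pos (letter_pwa b) LimInfV w)"
proof
  assume "(\<lambda>w. L_pos B LimInfV w) = (\<lambda>w. 1 - L_pos (letter_pwa b) LimInfV w)"
  then have L_B: "L_pos B LimInfV w = (if \<forall>\<^sub>F i in sequentially. w i = b then 0 else 1)" for w
    by (simp add: fun_eq_iff L_pos_letter_pwa_LimInfV)
  let ?G = "\<lambda>q \<sigma> q'. real_of_rat (weight B q \<sigma> q') < 1 / 2"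
  have eventually_b_AE: "AE \<omega> in choice_space B. \<exists>\<^sub>F i in sequentially. ?G (run_of B v \<omega> i) (v i) (run_of B v \<omega> (Suc i))"
    if "\<forall>\<^sub>F i in sequentially. v i = b" for v
  proof -
    have "AE \<omega> in choice_space B. run_value B LimInfV v \<omega> < ereal (1 / 2)"
    proof (rule ccontr)
      assume "\<not> ?thesis"
      then have "1 / 2 \<le> L_pos B LimInfV v"
        by (rule not_AE_imp_le_L_pos[OF assms value_function_LimInfV])
      with L_B[of v] that show False
        by simp
    qed
    then show ?thesis
    proof eventually_elim
      fix \<omega> assume "run_value B LimInfV v \<omega> < ereal (1 / 2)"
      then show "\<exists>\<^sub>F i in sequentially. ?G (run_of B v \<omega> i) (v i) (run_of B v \<omega> (Suc i))"
        by (auto simp: LimInfV_def weight_seq_def dest: Liminf_lessD)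
    qed
  qed
  obtain w where frequently_a: "\<exists>\<^sub>F i in sequentially. w i = a"
    and AE_G: "AE \<omega> in choice_space B. \<exists>\<^sub>F i in sequentially. ?G (run_of B w \<omega> i) (w i) (run_of B w \<omega> (Suc i))"
    using AE_frequently_diagonal_word[where x=a, OF eventually_b_AE] by blast
  from AE_G have "AE \<omega> in choice_space B. run_value B LimInfV w \<omega> < ereal (3 / 4)"
  proof (rule eventually_mono)
    fix \<omega> assume "\<exists>\<^sub>F i in sequentially. ?G (run_of B w \<omega> i) (w i) (run_of B w \<omega> (Suc i))"
    then have "\<exists>\<^sub>F i in sequentially. ereal (weight_seq B w (run_of B w \<omega>) i) \<le> ereal (1 / 2)"
      by (rule frequently_elim1) (simp add: weight_seq_def)
    then have "liminf (\<lambda>n. ereal (weight_seq B w (run_of B w \<omega>) n)) \<le> ereal (1 / 2)"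
      by (rule frequently_le_imp_Liminf_le)
    then show "run_value B LimInfV w \<omega> < ereal (3 / 4)"
      unfolding LimInfV_def by (rule le_less_trans) simp
  qed
  moreover have "3 / 4 < L_pos B LimInfV w"
    using L_B[of w] frequently_a by (simp add: not_frequently_a_iff[symmetric])
  ultimately show False
    using L_pos_gt_imp_not_AE[OF assms value_function_LimInfV] by blast
qed

theorem lemma22:
  shows "(\<exists>A :: ab pwa. wf_pwa A \<and>
            (\<forall>B :: ab pwa. wf_pwa B \<longrightarrow>
               (\<lambda>w. L_as B LimSupV w) \<noteq> (\<lambda>w. 1 - L_as A LimSupV w)))
       \<and> (\<exists>A' :: ab pwa. wf_pwa A' \<and>
            (\<forall>B' :: ab pwa. wf_pwa B' \<longrightarrow>
               (\<lambda>w. L_pos B' LimInfV w) \<noteq> (\<lambda>w. 1 - L_pos A' LimInfV w)))"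
  using wf_letter_pwa L_as_LimSupV_ne_complement_letter_a L_pos_LimInfV_ne_complement_letter_b
  by blast

end
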